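(* Fix $t>1$ and let $(g_{n,t})_{n\ge0}$ be defined by $g_{0,t}=1$, $g_{n,t}=n\,g_{n-1,t}^{\,t}$ $(n\ge1)$, and let $\sigma_t=\prod_{n=1}^\infty n^{1/t^n}$. Then as $n\to\infty$, $$g_{n,t}=\sigma_t^{\,t^n}n^{-1/(t-1)}\left[1+\frac{t}{(1-t)^2n}-\frac{t(t^2-t-1)}{2(1-t)^4n^2}+\frac{t(2t^4+t^3-11t^2+7t+2)}{6(1-t)^6n^3}+O\!\left(\frac1{n^4}\right)\right]^{-1}.$$ *)

theory Defs
  imports "HOL-Analysis.Analysis" "HOL-Library.Landau_Symbols"
begin

fun gseq :: "real \<Rightarrow> nat \<Rightarrow> real" where
  "gseq t 0 = 1"
| "gseq t (Suc n) = real (Suc n) * (gseq t n) powr t"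

definition sigma :: "real \<Rightarrow> real" where
  "sigma t = (\<Prod>n. real (Suc n) powr (1 / t ^ Suc n))"

end

theory Submission
  imports Defs "HOL-Real_Asymp.Real_Asymp"
begin

text \<open>
  Unrolling the recursion gives ln g(n) = t^n * sum_{k<n} ln(k+1) / t^(k+1), and ln sigma_t is the
  full series; so sigma_t^(t^n) n^(-1/(t-1)) / g(n) = exp S(n), where S(n) = sum_j t^(-j) ln(1 + j/n)
  is the tail of that series shifted by n, minus ln n * sum_{j>=1} t^(-j) = ln n / (t - 1).
  Expanding ln(1 + y) to third order with a quartic remainder gives
  S(n) = c1/n - c2/(2n^2) + c3/(3n^3) + O(n^-4), where the moments c_k = sum_j j^k t^(-j)
  satisfy (t - 1) c_k = sum_{i<k} (k choose i) c_i and are therefore rational in t.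
  Exponentiating this cubic produces the bracket.
\<close>

definition power_moment :: "nat \<Rightarrow> real \<Rightarrow> real" where
  "power_moment k x = (\<Sum>j. real j ^ k * x ^ j)"

lemma summable_power_moment:
  assumes "\<bar>x\<bar> < 1"
  shows "summable (\<lambda>j. real j ^ k * x ^ j)"
proof -
  have "conv_radius (\<lambda>j. real j ^ k) = 1"
    by (rule conv_radius_ratio_limit_nonzero[of _ 1]) (simp_all, real_asymp)
  with assms show ?thesis
    by (intro summable_in_conv_radius) simp
qed

lemma power_moment_sums:
  "\<bar>x\<bar> < 1 \<Longrightarrow> (\<lambda>j. real j ^ k * x ^ j) sums power_moment k x"
  unfolding power_moment_def by (rule summable_sums[OF summable_power_moment])

lemma power_moment_0: "\<bar>x\<bar> < 1 \<Longrightarrow> power_moment 0 x = 1 / (1 - x)"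
  by (simp add: power_moment_def suminf_geometric)

lemma power_moment_recurrence:
  assumes "\<bar>x\<bar> < 1" "k > 0"
  shows "(1 - x) * power_moment k x = x * (\<Sum>i<k. of_nat (k choose i) * power_moment i x)"
proof -
  have shifted: "(\<lambda>j. real (Suc j) ^ k * x ^ Suc j) sums power_moment k x"
    using power_moment_sums[OF assms(1), of k] assms(2)
    by (subst sums_Suc_iff) (simp add: zero_power)
  have binomial: "real (Suc j) ^ k * x ^ Suc j
      = x * (\<Sum>i\<le>k. of_nat (k choose i) * (real j ^ i * x ^ j))" for j
  proof -
    have "real (Suc j) ^ k = (\<Sum>i\<le>k. of_nat (k choose i) * real j ^ i)"
      using binomial_ring[of "real j" 1 k] by (simp add: ac_simps)
    then show ?thesis by (simp add: sum_distrib_left sum_distrib_right ac_simps)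
  qed
  from shifted have "(\<lambda>j. x * (\<Sum>i\<le>k. of_nat (k choose i) * (real j ^ i * x ^ j)))
      sums power_moment k x"
    by (simp only: binomial)
  moreover have "(\<lambda>j. x * (\<Sum>i\<le>k. of_nat (k choose i) * (real j ^ i * x ^ j)))
      sums (x * (\<Sum>i\<le>k. of_nat (k choose i) * power_moment i x))"
    by (intro sums_mult sums_sum power_moment_sums assms(1))
  ultimately have "power_moment k x = x * (\<Sum>i\<le>k. of_nat (k choose i) * power_moment i x)"
    by (rule sums_unique2)
  also have "\<dots> = x * (\<Sum>i<k. of_nat (k choose i) * power_moment i x) + x * power_moment k x"
    by (simp add: lessThan_Suc_atMost[symmetric] distrib_left)
  finally show ?thesis by (simp add: algebra_simps)
qed

lemma power_moments_at_inverse: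
  fixes t :: real
  assumes "t > 1"
  shows "power_moment 1 (1/t) = t / (t - 1)^2"
    and "power_moment 2 (1/t) = t * (t + 1) / (t - 1)^3"
    and "power_moment 3 (1/t) = t * (t^2 + 4 * t + 1) / (t - 1)^4"
proof -
  have x: "\<bar>1/t\<bar> < 1" using assms by simp
  define d where "d = t - 1"
  have t: "t = d + 1" and "d \<noteq> 0" using assms by (simp_all add: d_def)
  have M: "power_moment k (1/t) = (\<Sum>i<k. of_nat (k choose i) * power_moment i (1/t)) / d"
    if "k > 0" for k
    using power_moment_recurrence[OF x that] assms by (simp add: d_def field_simps)
  have m0: "power_moment 0 (1/t) = t / d"
    using power_moment_0[OF x] assms by (simp add: d_def field_simps)
  show m1: "power_moment 1 (1/t) = t / (t - 1)^2"
    by (simp add: M m0 d_def power2_eq_square)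
  have "power_moment 2 (1/t) = (power_moment 0 (1/t) + 2 * power_moment 1 (1/t)) / d"
    by (simp add: M numeral_eq_Suc)
  also have "\<dots> = t * (t + 1) / (t - 1)^3"
    using \<open>d \<noteq> 0\<close> unfolding m0 m1 d_def[symmetric] unfolding t
    by (simp add: field_simps eval_nat_numeral)
  finally show m2: "power_moment 2 (1/t) = t * (t + 1) / (t - 1)^3" .
  have "power_moment 3 (1/t)
      = (power_moment 0 (1/t) + 3 * power_moment 1 (1/t) + 3 * power_moment 2 (1/t)) / d"
    by (simp add: M numeral_eq_Suc)
  also have "\<dots> = t * (t^2 + 4 * t + 1) / (t - 1)^4"
    using \<open>d \<noteq> 0\<close> unfolding m0 m1 m2 d_def[symmetric] unfolding t
    by (simp add: field_simps eval_nat_numeral)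
  finally show "power_moment 3 (1/t) = t * (t^2 + 4 * t + 1) / (t - 1)^4" .
qed

lemma ln_one_plus_cubic_taylor_bound:
  fixes y :: real
  assumes "0 \<le> y"
  shows "\<bar>ln (1 + y) - (y - y^2/2 + y^3/3)\<bar> \<le> y^4/4"
proof -
  define r where "r y = ln (1 + y) - (y - y^2/2 + y^3/3)" for y :: real
  have r_deriv: "(r has_real_derivative - (y^3 / (1 + y))) (at y)" if "0 \<le> y" for y
  proof -
    have "(r has_real_derivative 1 / (1 + y) - (1 - y + y^2)) (at y)"
      unfolding r_def using that by (auto intro!: derivative_eq_intros simp: power2_eq_square)
    moreover have "1 / (1 + y) - (1 - y + y^2) = - (y^3 / (1 + y))"
      using that by (simp add: field_simps power2_eq_square power3_eq_cube)
    ultimately show ?thesis by simp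
  qed
  have "r y \<le> r 0"
  proof (rule DERIV_nonpos_imp_nonincreasing[OF assms])
    fix z :: real assume "0 \<le> z"
    then show "\<exists>d. (r has_real_derivative d) (at z) \<and> d \<le> 0"
      by (intro exI[of _ "- (z^3 / (1 + z))"] conjI r_deriv) auto
  qed
  moreover have "r 0 + 0^4/4 \<le> r y + y^4/4"
  proof (rule DERIV_nonneg_imp_nondecreasing[OF assms])
    fix z :: real assume "0 \<le> z"
    then have "z^3 / (1 + z) \<le> z^3"
      by (simp add: divide_le_eq mult_le_cancel_left1)
    with \<open>0 \<le> z\<close> show "\<exists>d. ((\<lambda>y. r y + y^4/4) has_real_derivative d) (at z) \<and> 0 \<le> d"
      by (intro exI[of _ "- (z^3 / (1 + z)) + z^3"] conjI derivative_eq_intros r_deriv)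
         (auto simp: r_deriv)
  qed
  ultimately show ?thesis by (simp add: r_def)
qed

definition weighted_log_series :: "real \<Rightarrow> real \<Rightarrow> real" where
  "weighted_log_series x u = (\<Sum>j. x ^ j * ln (1 + real j * u))"

definition weighted_log_taylor :: "real \<Rightarrow> real \<Rightarrow> real" where
  "weighted_log_taylor x u
     = power_moment 1 x * u - power_moment 2 x / 2 * u^2 + power_moment 3 x / 3 * u^3"

lemma summable_weighted_log_series:
  assumes "0 \<le> x" "x < 1" "0 \<le> u"
  shows "summable (\<lambda>j. x ^ j * ln (1 + real j * u))"
proof -
  have bound: "norm (x ^ j * ln (1 + real j * u)) \<le> u * (real j ^ 1 * x ^ j)" for j
  proof -
    have "0 \<le> ln (1 + real j * u)" "ln (1 + real j * u) \<le> real j * u"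
      using assms by (simp_all add: ln_add_one_self_le_self)
    moreover from this(2) have "x ^ j * ln (1 + real j * u) \<le> x ^ j * (real j * u)"
      using assms by (intro mult_left_mono) auto
    ultimately show ?thesis
      using assms by (simp add: abs_mult ac_simps)
  qed
  show ?thesis
    using assms by (intro summable_comparison_test'[OF summable_mult[OF summable_power_moment] bound]) simp
qed

lemma weighted_log_series_expansion:
  assumes "0 \<le> x" "x < 1" "0 \<le> u"
  shows "\<bar>weighted_log_series x u - weighted_log_taylor x u\<bar> \<le> power_moment 4 x / 4 * u^4"
proof -
  have x: "\<bar>x\<bar> < 1" using assms by simp
  let ?p = "\<lambda>y::real. y - y^2/2 + y^3/3"
  have "(\<lambda>j. x ^ j * ?p (real j * u))
      = (\<lambda>j. u * (real j ^ 1 * x ^ j) - u^2/2 * (real j ^ 2 * x ^ j) + u^3/3 * (real j ^ 3 * x ^ j))"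
    by (simp add: power_mult_distrib algebra_simps)
  moreover have "\<dots> sums (u * power_moment 1 x - u^2/2 * power_moment 2 x + u^3/3 * power_moment 3 x)"
    by (intro sums_add sums_diff sums_mult power_moment_sums x)
  ultimately have diff: "(\<lambda>j. x ^ j * ln (1 + real j * u) - x ^ j * ?p (real j * u))
      sums (weighted_log_series x u - weighted_log_taylor x u)"
    unfolding weighted_log_series_def weighted_log_taylor_def
    by (intro sums_diff summable_sums summable_weighted_log_series assms) (simp_all add: ac_simps)
  have "\<bar>x ^ j * ln (1 + real j * u) - x ^ j * ?p (real j * u)\<bar> \<le> u^4/4 * (real j ^ 4 * x ^ j)" for j
  proof -
    have "\<bar>x ^ j * ln (1 + real j * u) - x ^ j * ?p (real j * u)\<bar>
        = x ^ j * \<bar>ln (1 + real j * u) - ?p (real j * u)\<bar>"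
      using assms by (simp add: abs_mult right_diff_distrib[symmetric])
    also have "\<dots> \<le> x ^ j * ((real j * u)^4 / 4)"
      using assms by (intro mult_left_mono ln_one_plus_cubic_taylor_bound) auto
    finally show ?thesis by (simp add: power_mult_distrib ac_simps)
  qed
  then have "\<bar>weighted_log_series x u - weighted_log_taylor x u\<bar>
      \<le> (\<Sum>j. u^4/4 * (real j ^ 4 * x ^ j))"
    unfolding sums_unique[OF diff] real_norm_def[symmetric]
    by (intro norm_suminf_le summable_mult summable_power_moment x) simp
  also have "\<dots> = u^4/4 * power_moment 4 x"
    unfolding power_moment_def by (rule suminf_mult[OF summable_power_moment[OF x]])
  finally show ?thesis by (simp add: ac_simps)
qed

lemma abs_exp_diff_le:
  fixes a b :: real
  shows "\<bar>exp a - exp b\<bar> \<le> (exp a + exp b) * \<bar>a - b\<bar>"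
proof -
  have "\<bar>exp a - exp b\<bar> \<le> (exp a + exp b) * \<bar>a - b\<bar>" if "a \<le> b" for a b :: real
  proof -
    have "exp b * (1 + (a - b)) \<le> exp a"
      using mult_left_mono[OF exp_ge_add_one_self[of "a - b"], of "exp b"] by (simp add: exp_diff)
    then have "\<bar>exp a - exp b\<bar> \<le> exp b * (b - a)"
      using that by (simp add: algebra_simps)
    also have "\<dots> \<le> (exp a + exp b) * \<bar>a - b\<bar>"
      using that by (simp add: distrib_right)
    finally show ?thesis .
  qed
  then show ?thesis
    by (metis abs_minus_commute add.commute linear)
qed

lemma exp_diff_bigo:
  fixes f g :: "'a \<Rightarrow> real"
  assumes "(f \<longlongrightarrow> a) F" "(g \<longlongrightarrow> b) F"
  shows "(\<lambda>x. exp (f x) - exp (g x)) \<in> O[F](\<lambda>x. f x - g x)"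
proof -
  have "(\<lambda>x. exp (f x) - exp (g x)) \<in> O[F](\<lambda>x. (exp (f x) + exp (g x)) * (f x - g x))"
    by (intro bigoI[where c = 1] always_eventually allI) (simp add: abs_exp_diff_le abs_mult)
  also have "(\<lambda>x. exp (f x) + exp (g x)) \<in> O[F](\<lambda>_. 1)"
    using assms by (intro bigoI_tendsto[where c = "exp a + exp b"]) (auto intro!: tendsto_intros)
  then have "(\<lambda>x. (exp (f x) + exp (g x)) * (f x - g x)) \<in> O[F](\<lambda>x. 1 * (f x - g x))"
    by (rule landau_o.big.mult) simp
  finally show ?thesis by simp
qed

lemma bigo_tendsto_zero:
  fixes f g :: "'a \<Rightarrow> real"
  assumes "f \<in> O[F](g)" "(g \<longlongrightarrow> 0) F"
  shows "(f \<longlongrightarrow> 0) F"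
proof -
  obtain c where "eventually (\<lambda>x. norm (f x) \<le> c * norm (g x)) F"
    using assms(1) by (rule landau_o.bigE)
  then have "eventually (\<lambda>x. norm (f x) \<le> norm (g x) * c) F"
    by (simp add: mult.commute)
  then show ?thesis
    by (rule tendsto_0_le[OF assms(2)])
qed

lemma exp_weighted_log_series_bigo:
  assumes "0 \<le> x" "x < 1"
  shows "(\<lambda>n. exp (weighted_log_series x (1 / real n)) - exp (weighted_log_taylor x (1 / real n)))
           \<in> O(\<lambda>n. 1 / (real n)^4)"
proof -
  define S where "S n = weighted_log_series x (1 / real n)" for n :: nat
  define Q where "Q n = weighted_log_taylor x (1 / real n)" for n :: nat
  have S_Q: "(\<lambda>n. S n - Q n) \<in> O(\<lambda>n. 1 / (real n)^4)"
    using assms weighted_log_series_expansion[of x "1 / real _"]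
    by (intro bigoI[where c = "power_moment 4 x / 4"] always_eventually allI)
       (simp add: S_def Q_def power_one_over)
  have Q_lim: "Q \<longlonglongrightarrow> 0"
    unfolding Q_def weighted_log_taylor_def by real_asymp
  have "(\<lambda>n. S n - Q n) \<longlonglongrightarrow> 0"
    using S_Q by (rule bigo_tendsto_zero) real_asymp
  from tendsto_add[OF this Q_lim] have "S \<longlonglongrightarrow> 0"
    by simp
  from landau_o.big_trans[OF exp_diff_bigo[OF this Q_lim] S_Q] show ?thesis
    unfolding S_def Q_def .
qed

lemma gseq_pos: "gseq t n > 0"
  by (induction n) auto

lemma ln_gseq:
  assumes "t \<noteq> 0"
  shows "ln (gseq t n) = t ^ n * (\<Sum>k<n. ln (real (Suc k)) / t ^ Suc k)"
proof (induction n)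
  case (Suc n)
  have "ln (gseq t (Suc n)) = ln (real (Suc n)) + t * ln (gseq t n)"
    using gseq_pos[of t n] by (simp add: ln_mult ln_powr)
  with Suc.IH assms show ?case
    by (simp add: algebra_simps)
qed simp

lemma ln_sigma_sums:
  assumes "t > 1"
  shows "sigma t > 0" and "(\<lambda>k. ln (real (Suc k)) / t ^ Suc k) sums ln (sigma t)"
proof -
  have bound: "norm (ln (real (Suc k)) / t ^ Suc k) \<le> real k ^ 1 * (1/t) ^ k" for k
  proof -
    have "ln (real (Suc k)) \<le> real k"
      using ln_add_one_self_le_self[of "real k"] by (simp add: add.commute)
    moreover have "real k \<le> real k * t"
      using assms by (simp add: mult_le_cancel_left1)
    ultimately show ?thesis
      using assms by (simp add: power_one_over divide_le_eq)
  qed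
  have summable: "summable (\<lambda>k. ln (real (Suc k)) / t ^ Suc k)"
    by (rule summable_comparison_test'[OF summable_power_moment bound]) (use assms in simp)
  have "sigma t = (\<Prod>k. exp (ln (real (Suc k)) / t ^ Suc k))"
    unfolding sigma_def by (simp add: powr_def)
  also have "\<dots> = exp (\<Sum>k. ln (real (Suc k)) / t ^ Suc k)"
    by (rule prodinf_exp[OF summable])
  finally have "sigma t = exp (\<Sum>k. ln (real (Suc k)) / t ^ Suc k)" .
  then show "sigma t > 0" and "(\<lambda>k. ln (real (Suc k)) / t ^ Suc k) sums ln (sigma t)"
    using summable_sums[OF summable] by simp_all
qed

lemma weighted_log_series_at_inverse:
  assumes "t > 1" "n > 0"
  shows "weighted_log_series (1/t) (1 / real n)
           = t ^ n * ln (sigma t) - ln (real n) / (t - 1) - ln (gseq t n)"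
proof -
  define f where "f k = ln (real (Suc k)) / t ^ Suc k" for k
  have "(\<lambda>j. t ^ n * f (j + n)) sums (t ^ n * (ln (sigma t) - (\<Sum>k<n. f k)))"
    unfolding f_def by (intro sums_mult sums_split_initial_segment ln_sigma_sums assms)
  moreover have "t ^ n * f (j + n) = (1/t) ^ Suc j * ln (real (Suc j + n))" for j
    using assms by (simp add: f_def power_add power_one_over field_simps)
  moreover have "t ^ n * (ln (sigma t) - (\<Sum>k<n. f k)) = t ^ n * ln (sigma t) - ln (gseq t n)"
    using assms by (simp add: ln_gseq f_def right_diff_distrib)
  ultimately have tail:
    "(\<lambda>j. (1/t) ^ Suc j * ln (real (Suc j + n))) sums (t ^ n * ln (sigma t) - ln (gseq t n))"
    by simp
  have "(\<lambda>j. ln (real n) / t * (1/t) ^ j) sums (ln (real n) / t * (1 / (1 - 1/t)))"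
    using assms by (intro sums_mult geometric_sums) simp
  moreover have "ln (real n) / t * (1 / (1 - 1/t)) = ln (real n) / (t - 1)"
    using assms by (simp add: field_simps)
  moreover have "(\<lambda>j. ln (real n) / t * (1/t) ^ j) = (\<lambda>j. (1/t) ^ Suc j * ln (real n))"
    by (simp add: fun_eq_iff)
  ultimately have const: "(\<lambda>j. (1/t) ^ Suc j * ln (real n)) sums (ln (real n) / (t - 1))"
    by metis
  have log_shift: "ln (real (Suc j + n)) - ln (real n) = ln (1 + real (Suc j) * (1 / real n))" for j
  proof -
    have "1 + real (Suc j) * (1 / real n) = real (Suc j + n) / real n"
      using assms by (simp add: field_simps)
    then show ?thesis
      using assms by (simp add: ln_div del: of_nat_Suc of_nat_add)
  qed
  have "(\<lambda>j. (1/t) ^ Suc j * ln (1 + real (Suc j) * (1 / real n)))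
      sums (t ^ n * ln (sigma t) - ln (gseq t n) - ln (real n) / (t - 1))"
    using sums_diff[OF tail const] by (simp only: right_diff_distrib[symmetric] log_shift)
  then show ?thesis
    unfolding weighted_log_series_def by (subst (asm) sums_Suc_iff) (simp add: sums_iff)
qed

lemma gseq_ratio_eq_exp:
  assumes "t > 1" "n > 0"
  shows "sigma t powr (t ^ n) * real n powr (-1 / (t - 1)) / gseq t n
           = exp (weighted_log_series (1/t) (1 / real n))"
proof -
  have "sigma t powr (t ^ n) * real n powr (-1 / (t - 1)) / gseq t n
      = exp (t ^ n * ln (sigma t)) * exp (- (ln (real n) / (t - 1))) / exp (ln (gseq t n))"
    using ln_sigma_sums(1)[OF assms(1)] gseq_pos[of t n] assms(2) by (simp add: powr_def ac_simps)
  also have "\<dots> = exp (weighted_log_series (1/t) (1 / real n))"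
    unfolding weighted_log_series_at_inverse[OF assms] exp_diff exp_minus by (simp add: divide_inverse)
  finally show ?thesis .
qed

lemma exp_moment_polynomial_expansion:
  fixes t :: real
  assumes "t > 1"
  shows "(\<lambda>n::nat. exp (t / (t - 1)^2 * (1 / real n) - t * (t + 1) / (t - 1)^3 / 2 * (1 / real n)^2
                        + t * (t^2 + 4 * t + 1) / (t - 1)^4 / 3 * (1 / real n)^3)
            - (1 + t / ((1 - t)^2 * real n)
                 - t * (t^2 - t - 1) / (2 * (1 - t)^4 * (real n)^2)
                 + t * (2 * t^4 + t^3 - 11 * t^2 + 7 * t + 2) / (6 * (1 - t)^6 * (real n)^3)))
         \<in> O(\<lambda>n. 1 / (real n)^4)"
proof -
  \<comment> \<open>In terms of \<open>d = t - 1\<close> every coefficient is a polynomial over a power of \<open>d\<close>,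
    so the zero tests performed by real_asymp reduce to field normalisation.\<close>
  obtain d where t: "t = d + 1" and "d > 0"
    using assms by (intro that[of "t - 1"]) auto
  then have "d \<noteq> 0" by simp
  then show ?thesis
    unfolding t by (real_asymp simp add: field_simps eval_nat_numeral)
qed

theorem theorem22:
  fixes t :: real
  assumes "t > 1"
  shows "(\<lambda>n::nat. (sigma t powr (t ^ n) * real n powr (-1 / (t - 1))) / gseq t n
            - (1 + t / ((1 - t)^2 * real n)
                 - t * (t^2 - t - 1) / (2 * (1 - t)^4 * (real n)^2)
                 + t * (2 * t^4 + t^3 - 11 * t^2 + 7 * t + 2) / (6 * (1 - t)^6 * (real n)^3)))
         \<in> O(\<lambda>n. 1 / (real n)^4)"
proof -
  define P where "P n = 1 + t / ((1 - t)^2 * real n)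
                 - t * (t^2 - t - 1) / (2 * (1 - t)^4 * (real n)^2)
                 + t * (2 * t^4 + t^3 - 11 * t^2 + 7 * t + 2) / (6 * (1 - t)^6 * (real n)^3)" for n :: nat
  define S where "S n = weighted_log_series (1/t) (1 / real n)" for n :: nat
  define Q where "Q n = weighted_log_taylor (1/t) (1 / real n)" for n :: nat
  have "(\<lambda>n. exp (S n) - exp (Q n)) \<in> O(\<lambda>n. 1 / (real n)^4)"
    unfolding S_def Q_def using assms by (intro exp_weighted_log_series_bigo) auto
  moreover have "(\<lambda>n. exp (Q n) - P n) \<in> O(\<lambda>n. 1 / (real n)^4)"
    unfolding Q_def P_def weighted_log_taylor_def power_moments_at_inverse[OF assms]
    by (rule exp_moment_polynomial_expansion[OF assms])
  ultimately have "(\<lambda>n. (exp (S n) - exp (Q n)) + (exp (Q n) - P n)) \<in> O(\<lambda>n. 1 / (real n)^4)"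
    by (rule sum_in_bigo(1))
  moreover have "\<forall>\<^sub>F n in sequentially.
      (exp (S n) - exp (Q n)) + (exp (Q n) - P n)
      = sigma t powr (t ^ n) * real n powr (-1 / (t - 1)) / gseq t n - P n"
    using eventually_gt_at_top[of 0]
  proof eventually_elim
    case (elim n)
    have "sigma t powr (t ^ n) * real n powr (-1 / (t - 1)) / gseq t n = exp (S n)"
      unfolding S_def by (rule gseq_ratio_eq_exp[OF assms elim])
    then show ?case by simp
  qed
  ultimately show ?thesis
    unfolding P_def by (rule landau_o.big.in_cong[THEN iffD1, rotated])
qed

end
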